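(* Let $n\ge2$ and consider an equation $\sum_{i,j=1}^n f_{ij}({\bf p})u_{x_ix_j}=0$, $p^i=u_{x_i}$, with $(f_{ij})$ symmetric and nondegenerate, with inverse $(f^{ij})$. Define $$s_k=\frac{f^{ij}}{(n+2)(1-n)}\left(\partial_kf_{ij}-n\,\partial_jf_{ik}\right),\qquad c_k=\frac{f^{ij}}{(n+2)(n-1)}\left((n+3)\partial_kf_{ij}-2(n+1)\partial_jf_{ik}\right),$$ $$a_{ijk}=\partial_kf_{ij}-(c_k+2s_k)f_{ij}-s_if_{kj}-s_jf_{ki},$$ where $\partial_k=\partial/\partial p^k$ and repeated indices are summed. The equation is linearizable by a transformation from the equivalence group $SL(n+1,\mathbb{R})$ if and only if (1) $a_{ijk}=0$ identically, and (2) $\partial_js_i-s_is_j=0$ for all $i,j$ (equivalently, the connection with Christoffel symbols $\Gamma^i_{jk}=s_j\delta^i_k+s_k\delta^i_j$ is flat).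
   Context: The equivalence group consists of transformations $\tilde{\bf x}=C{\bf x}+bu$, $\tilde u=c{\bf x}+\beta u$ with the corresponding $(n+1)\times(n+1)$ matrix in $SL(n+1,\mathbb{R})$; they act on the row vector ${\bf p}=(p^1,\dots,p^n)$ projectively by $\tilde{\bf p}=\kappa{\bf p}C^{-1}+cC^{-1}$, $\kappa=1/\det(C+b{\bf p})$, and on $F=(f_{ij})$ by $\tilde F=\kappa^{-1}(C+b{\bf p})F(C+b{\bf p})^t$. Linearizable means that the transformed coefficient matrix is proportional (by a function) to a constant matrix. *)

theory Defs
  imports "HOL-Analysis.Analysis"
begin

definition pd :: "'n::finite \<Rightarrow> (real^'n \<Rightarrow> real) \<Rightarrow> real^'n \<Rightarrow> real" where
  "pd k g p = frechet_derivative g (at p) (axis k 1)"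

fun Ck_on :: "nat \<Rightarrow> (real^'n::finite) set \<Rightarrow> (real^'n \<Rightarrow> real) \<Rightarrow> bool" where
  "Ck_on 0 U g = continuous_on U g"
| "Ck_on (Suc k) U g = ((\<forall>p\<in>U. g differentiable (at p)) \<and> (\<forall>i. Ck_on k U (pd i g)))"

definition smooth_on :: "(real^'n::finite) set \<Rightarrow> (real^'n \<Rightarrow> real) \<Rightarrow> bool" where
  "smooth_on U g = (\<forall>k. Ck_on k U g)"

definition ent :: "(real^'n \<Rightarrow> real^'n^'n) \<Rightarrow> 'n::finite \<Rightarrow> 'n \<Rightarrow> real^'n \<Rightarrow> real" where
  "ent F i j = (\<lambda>q. F q $ i $ j)"

definition s_coef :: "(real^'n \<Rightarrow> real^'n^'n) \<Rightarrow> 'n::finite \<Rightarrow> real^'n \<Rightarrow> real" where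
  "s_coef F k p = (let n = real CARD('n); Fi = matrix_inv (F p) in
     (\<Sum>i\<in>UNIV. \<Sum>j\<in>UNIV. Fi $ i $ j *
        (pd k (ent F i j) p - n * pd j (ent F i k) p)) / ((n + 2) * (1 - n)))"

definition c_coef :: "(real^'n \<Rightarrow> real^'n^'n) \<Rightarrow> 'n::finite \<Rightarrow> real^'n \<Rightarrow> real" where
  "c_coef F k p = (let n = real CARD('n); Fi = matrix_inv (F p) in
     (\<Sum>i\<in>UNIV. \<Sum>j\<in>UNIV. Fi $ i $ j *
        ((n + 3) * pd k (ent F i j) p - 2 * (n + 1) * pd j (ent F i k) p)) / ((n + 2) * (n - 1)))"

definition a_coef :: "(real^'n \<Rightarrow> real^'n^'n) \<Rightarrow> 'n::finite \<Rightarrow> 'n \<Rightarrow> 'n \<Rightarrow> real^'n \<Rightarrow> real" where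
  "a_coef F i j k p = pd k (ent F i j) p - (c_coef F k p + 2 * s_coef F k p) * F p $ i $ j
      - s_coef F i p * F p $ k $ j - s_coef F j p * F p $ k $ i"

text \<open>The (n+1)x(n+1) matrix [[C, b],[c, beta]] of the point transformation
  x~ = C x + b u, u~ = c x + beta u; index set 'n + unit (the extra index is u).\<close>
definition block_mat :: "real^'n^'n \<Rightarrow> real^'n \<Rightarrow> real^'n \<Rightarrow> real \<Rightarrow> real^('n::finite + unit)^('n + unit)" where
  "block_mat C b c \<beta> = (\<chi> r s. case r of
       Inl i \<Rightarrow> (case s of Inl j \<Rightarrow> C $ i $ j | Inr _ \<Rightarrow> b $ i)
     | Inr _ \<Rightarrow> (case s of Inl j \<Rightarrow> c $ j | Inr _ \<Rightarrow> \<beta>))"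

definition Cbp :: "real^'n^'n \<Rightarrow> real^'n \<Rightarrow> real^'n::finite \<Rightarrow> real^'n^'n" where
  "Cbp C b p = C + (\<chi> i j. b $ i * p $ j)"

definition transformed_coef :: "real^'n^'n \<Rightarrow> real^'n \<Rightarrow> (real^'n \<Rightarrow> real^'n^'n) \<Rightarrow> real^'n::finite \<Rightarrow> real^'n^'n" where
  "transformed_coef C b F p = det (Cbp C b p) *\<^sub>R (Cbp C b p ** F p ** transpose (Cbp C b p))"

definition linearizable_at :: "(real^'n \<Rightarrow> real^'n^'n) \<Rightarrow> (real^'n::finite) set \<Rightarrow> real^'n \<Rightarrow> bool" where
  "linearizable_at F U p0 = (\<exists>V C b c \<beta> (lam :: real^'n \<Rightarrow> real) (K :: real^'n^'n).
      open V \<and> p0 \<in> V \<and> V \<subseteq> U \<and> det (block_mat C b c \<beta>) = 1 \<and>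
      (\<forall>p\<in>V. det (Cbp C b p) \<noteq> 0 \<and> transformed_coef C b F p = lam p *\<^sub>R K))"

end

theory Submission
  imports Defs
begin

text \<open>Write \<open>P = (C + b p) F (C + b p)\<^sup>t\<close> and \<open>\<sigma> = -(C + b p)\<^sup>-\<^sup>1 b\<close>. Differentiating,
  \<open>\<partial>\<^sub>k P = \<gamma>\<^sub>k P\<close> for scalars \<open>\<gamma>\<^sub>k\<close> (i.e. \<open>P\<close> stays proportional to a constant matrix) exactly
  when \<open>\<partial>\<^sub>k F = \<gamma>\<^sub>k F + \<sigma> F\<^sub>k\<^sup>t + F\<^sub>k \<sigma>\<^sup>t\<close>, \<open>F\<^sub>k\<close> the \<open>k\<close>-th column of \<open>F\<close>. Contracting this
  identity with \<open>F\<^sup>-\<^sup>1\<close> identifies \<open>\<sigma>\<close> with \<open>s\<close>, so it says \<open>a\<^sub>i\<^sub>j\<^sub>k = 0\<close>; and \<open>\<sigma>\<close> itself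
  always satisfies \<open>\<partial>\<^sub>j \<sigma>\<^sub>i = \<sigma>\<^sub>i \<sigma>\<^sub>j\<close>. Conversely, if \<open>a = 0\<close> and \<open>s\<close> is flat, uniqueness for the
  Riccati system (a Gronwall estimate) gives \<open>s(p) = s(p\<^sub>0) / (1 - s(p\<^sub>0)\<cdot>(p - p\<^sub>0))\<close> near
  \<open>p\<^sub>0\<close>. An explicit \<open>C\<close> with \<open>b = -s(p\<^sub>0)\<close> then has \<open>(C + b p) s = -b\<close>, hence
  \<open>\<partial>\<^sub>k P = \<gamma>\<^sub>k P\<close>, and the same uniqueness argument makes \<open>P\<close> proportional to \<open>P(p\<^sub>0)\<close>. The
  last row of the transformation is then chosen to make its determinant \<open>1\<close>.\<close>

lemma pd_eqI: "(f has_derivative f') (at p) \<Longrightarrow> pd k f p = f' (axis k 1)"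
  unfolding pd_def by (metis frechet_derivative_at)

lemma has_derivative_pd:
  fixes f :: "real^'n::finite \<Rightarrow> real"
  assumes "f differentiable (at p)"
  shows "(f has_derivative (\<lambda>h. \<Sum>k\<in>UNIV. h$k * pd k f p)) (at p)"
proof -
  have f': "(f has_derivative frechet_derivative f (at p)) (at p)"
    using assms frechet_derivative_works by blast
  have "frechet_derivative f (at p) h = (\<Sum>k\<in>UNIV. h$k * pd k f p)" for h
  proof -
    have "linear (frechet_derivative f (at p))"
      using f' has_derivative_linear by blast
    then have "frechet_derivative f (at p) (\<Sum>k\<in>UNIV. h$k *\<^sub>R axis k 1) = (\<Sum>k\<in>UNIV. h$k * pd k f p)"
      unfolding pd_def by (simp add: linear_sum linear_scale)
    then show ?thesis
      using basis_expansion[of h] by (simp add: scalar_mult_eq_scaleR)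
  qed
  then have "frechet_derivative f (at p) = (\<lambda>h. \<Sum>k\<in>UNIV. h$k * pd k f p)" ..
  with f' show ?thesis by simp
qed

lemma sum_axis_mult [simp]: "(\<Sum>j\<in>UNIV. (axis k (1::real) :: real^'n::finite) $ j * x j) = x k"
  by (simp add: axis_def if_distrib[of "\<lambda>t. t * _"] cong: if_cong)

lemma pd_add:
  "f differentiable (at p) \<Longrightarrow> g differentiable (at p) \<Longrightarrow>
   pd k (\<lambda>q. f q + g q) p = pd k f p + pd k g p"
  using pd_eqI[OF has_derivative_add[OF has_derivative_pd has_derivative_pd]] by simp

lemma pd_diff:
  "f differentiable (at p) \<Longrightarrow> g differentiable (at p) \<Longrightarrow>
   pd k (\<lambda>q. f q - g q) p = pd k f p - pd k g p"
  using pd_eqI[OF has_derivative_diff[OF has_derivative_pd has_derivative_pd]] by simp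

lemma pd_mult:
  "f differentiable (at p) \<Longrightarrow> g differentiable (at p) \<Longrightarrow>
   pd k (\<lambda>q. f q * g q) p = f p * pd k g p + pd k f p * g p"
  using pd_eqI[OF has_derivative_mult[OF has_derivative_pd has_derivative_pd]] by simp

lemma pd_const [simp]: "pd k (\<lambda>q. c) p = 0"
  using pd_eqI[of "\<lambda>q. c" "\<lambda>h. 0"] by simp

lemma pd_cmult: "f differentiable (at p) \<Longrightarrow> pd k (\<lambda>q. c * f q) p = c * pd k f p"
  using pd_mult[of "\<lambda>q. c" p f k] by simp

lemma pd_component: "pd k (\<lambda>q. q $ j) p = (if j = k then 1 else 0)"
  using pd_eqI[OF bounded_linear_imp_has_derivative[OF bounded_linear_vec_nth[of j]]]
  by (simp add: axis_def)

lemma differentiable_component [simp]: "(\<lambda>q. q $ j) differentiable (at p)"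
  using bounded_linear_vec_nth bounded_linear_imp_differentiable by blast

lemma pd_sum:
  assumes "finite I" "\<And>i. i \<in> I \<Longrightarrow> f i differentiable (at p)"
  shows "pd k (\<lambda>q. \<Sum>i\<in>I. f i q) p = (\<Sum>i\<in>I. pd k (f i) p)"
proof -
  have "((\<lambda>q. \<Sum>i\<in>I. f i q) has_derivative (\<lambda>h. \<Sum>i\<in>I. \<Sum>k\<in>UNIV. h$k * pd k (f i) p)) (at p)"
    using assms by (intro has_derivative_sum has_derivative_pd)
  from pd_eqI[OF this] show ?thesis by simp
qed

lemma pd_cong_open:
  "open V \<Longrightarrow> p \<in> V \<Longrightarrow> (\<And>q. q \<in> V \<Longrightarrow> f q = g q) \<Longrightarrow> f differentiable (at p) \<Longrightarrow>
   pd k g p = pd k f p"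
  unfolding pd_def by (metis frechet_derivative_transform_within_open)

lemma differentiable_cong_open:
  "open V \<Longrightarrow> p \<in> V \<Longrightarrow> (\<And>q. q \<in> V \<Longrightarrow> f q = g q) \<Longrightarrow> f differentiable (at p) \<Longrightarrow>
   g differentiable (at p)"
  unfolding differentiable_def by (metis has_derivative_transform_within_open)

lemma smooth_on_imp_differentiable: "smooth_on U g \<Longrightarrow> p \<in> U \<Longrightarrow> g differentiable (at p)"
  unfolding smooth_on_def using Ck_on.simps(2)[of 0 U g] by blast

lemma smooth_on_pd: "smooth_on U g \<Longrightarrow> smooth_on U (pd i g)"
  unfolding smooth_on_def by (metis Ck_on.simps(2))

lemma differentiable_prod:
  fixes f :: "'i \<Rightarrow> 'a::real_normed_vector \<Rightarrow> real"
  shows "(\<And>i. i \<in> I \<Longrightarrow> f i differentiable (at p)) \<Longrightarrow> (\<lambda>q. \<Prod>i\<in>I. f i q) differentiable (at p)"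
  by (induction I rule: infinite_finite_induct) auto

lemma differentiable_det:
  fixes A :: "real^'m::finite \<Rightarrow> real^'n::finite^'n"
  assumes "\<And>i j. (\<lambda>q. A q $ i $ j) differentiable (at p)"
  shows "(\<lambda>q. det (A q)) differentiable (at p)"
  unfolding det_def using assms by (intro differentiable_sum ballI differentiable_mult differentiable_prod) auto

lemma matrix_inv_mult:
  fixes A :: "real^'n::finite^'n"
  assumes "invertible A"
  shows "A ** matrix_inv A = mat 1" and "matrix_inv A ** A = mat 1"
  using someI_ex[OF assms[unfolded invertible_def]] unfolding matrix_inv_def by auto

lemma matrix_inv_cramer:
  fixes A :: "real^'n::finite^'n"
  assumes "invertible A"
  shows "matrix_inv A $ i $ j = det (\<chi> r s. if s = i then axis j 1 $ r else A $ r $ s) / det A"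
proof -
  have "A *v column j (matrix_inv A) = axis j 1"
    using arg_cong[OF matrix_inv_mult(1)[OF assms], of "\<lambda>B. column j B"]
    by (simp add: vec_eq_iff column_def matrix_matrix_mult_def matrix_vector_mult_def mat_def axis_def)
  then have "column j (matrix_inv A) $ i = det (\<chi> r s. if s = i then axis j 1 $ r else A $ r $ s) / det A"
    using cramer[of A] assms invertible_det_nz by force
  then show ?thesis by (simp add: column_def)
qed

lemma differentiable_matrix_inv:
  fixes A :: "real^'m::finite \<Rightarrow> real^'n::finite^'n"
  assumes "open U" "p \<in> U" "\<And>q. q \<in> U \<Longrightarrow> invertible (A q)"
    and A: "\<And>r s. (\<lambda>q. A q $ r $ s) differentiable (at p)"
  shows "(\<lambda>q. matrix_inv (A q) $ i $ j) differentiable (at p)"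
proof (rule differentiable_cong_open[OF assms(1,2)])
  have "(\<lambda>q. (\<chi> r s. if s = i then axis j 1 $ r else A q $ r $ s) $ r $ s) differentiable (at p)" for r s
    using A by (cases "s = i") auto
  then show "(\<lambda>q. det (\<chi> r s. if s = i then axis j 1 $ r else A q $ r $ s) / det (A q)) differentiable (at p)"
    using assms(2,3) A invertible_det_nz by (intro differentiable_divide differentiable_det) blast+
qed (simp add: assms(3) matrix_inv_cramer)

section \<open>Congruence by a rank-one perturbation\<close>

definition outer :: "real^'n::finite \<Rightarrow> real^'m::finite \<Rightarrow> real^'m^'n" where
  "outer u v = (\<chi> i j. u$i * v$j)"

lemma matrix_add_rdistrib: "(A + B) ** C = A ** C + B ** (C :: real^'m::finite^'n::finite)"
  by (simp add: vec_eq_iff matrix_matrix_mult_def sum.distrib algebra_simps)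

lemma matrix_mult_outer: "A ** outer u v = outer (A *v u) v"
  by (simp add: vec_eq_iff matrix_matrix_mult_def matrix_vector_mult_def outer_def sum_distrib_left mult_ac)

lemma outer_mult_matrix: "outer u v ** A = outer u (transpose A *v v)"
  by (simp add: vec_eq_iff matrix_matrix_mult_def matrix_vector_mult_def transpose_def outer_def
      sum_distrib_left mult_ac)

lemma transpose_outer: "transpose (outer u v) = outer v u"
  by (simp add: vec_eq_iff transpose_def outer_def mult_ac)

lemma outer_uminus_left: "outer (- u) v = - outer u v"
  by (simp add: vec_eq_iff outer_def)

lemma outer_uminus_right: "outer u (- v) = - outer u v"
  by (simp add: vec_eq_iff outer_def)

lemma invertible_imp_nonzero:
  assumes "invertible (A :: real^'n::finite^'n)"
  shows "A \<noteq> 0"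
proof
  assume "A = 0"
  then have "det A = 0" by (intro det_zero_row(1)[of undefined]) (simp add: row_def vec_eq_iff)
  with assms show False by (simp add: invertible_det_nz)
qed

lemma invertible_congruence:
  "invertible M \<Longrightarrow> invertible F \<Longrightarrow> invertible (M ** F ** transpose (M :: real^'n::finite^'n))"
  by (simp add: invertible_det_nz det_mul det_transpose)

lemma linear_congruence: "linear (\<lambda>X::real^'n::finite^'n. M ** X ** transpose M)"
  by (auto simp: linear_iff vec_eq_iff matrix_matrix_mult_def sum.distrib sum_distrib_left algebra_simps)

lemma congruence_cancel:
  fixes M X Y :: "real^'n::finite^'n"
  assumes "invertible M"
  shows "M ** X ** transpose M = M ** Y ** transpose M \<longleftrightarrow> X = Y"
proof
  assume eq: "M ** X ** transpose M = M ** Y ** transpose M"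
  have inv: "matrix_inv M ** M = mat 1" "transpose M ** transpose (matrix_inv M) = mat 1"
    using matrix_inv_mult(2)[OF assms] matrix_transpose_mul[of "matrix_inv M" M] by (auto simp: transpose_mat)
  have "matrix_inv M ** (M ** Z ** transpose M) ** transpose (matrix_inv M) = Z" for Z
    by (simp add: matrix_mul_assoc inv flip: matrix_mul_assoc[of _ "transpose M"])
  from this[of X] this[of Y] eq show "X = Y" by metis
qed simp

lemma transvection_cross_terms:
  fixes M F :: "real^'n::finite^'n"
  assumes sym: "transpose F = F" and M\<sigma>: "M *v \<sigma> = - b"
  shows "outer b (axis k 1) ** F ** transpose M + M ** F ** transpose (outer b (axis k 1))
       = - (M ** (outer \<sigma> (column k F) + outer (column k F) \<sigma>) ** transpose M)"
proof -
  let ?c = "column k F"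
  have "outer b (axis k 1) ** F ** transpose M = outer b (M *v ?c)"
    by (simp add: outer_mult_matrix sym matrix_vector_mult_basis)
  moreover have "M ** F ** transpose (outer b (axis k 1)) = outer (M *v ?c) b"
    by (simp add: transpose_outer matrix_mult_outer matrix_vector_mul_assoc
        flip: matrix_vector_mult_basis)
  moreover have "M ** outer \<sigma> ?c ** transpose M = - outer b (M *v ?c)"
    by (simp add: matrix_mult_outer outer_mult_matrix M\<sigma>) (simp add: outer_uminus_left)
  moreover have "M ** outer ?c \<sigma> ** transpose M = - outer (M *v ?c) b"
    by (simp add: matrix_mult_outer outer_mult_matrix M\<sigma> outer_uminus_right)
  ultimately show ?thesis
    by (simp add: linear_add[OF linear_congruence])
qed

lemma congruence_derivative_iff:
  fixes M F D :: "real^'n::finite^'n"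
  assumes "invertible M" "transpose F = F" "M *v \<sigma> = - b"
  shows "outer b (axis k 1) ** F ** transpose M + M ** D ** transpose M
           + M ** F ** transpose (outer b (axis k 1)) = t *\<^sub>R (M ** F ** transpose M)
     \<longleftrightarrow> D = t *\<^sub>R F + outer \<sigma> (column k F) + outer (column k F) \<sigma>"
  (is "?lhs \<longleftrightarrow> _")
proof -
  let ?S = "outer \<sigma> (column k F) + outer (column k F) \<sigma>"
  have "?lhs \<longleftrightarrow> M ** (D - ?S) ** transpose M = M ** (t *\<^sub>R F) ** transpose M"
    using transvection_cross_terms[OF assms(2,3), of k]
    by (auto simp: linear_diff[OF linear_congruence] linear_scale[OF linear_congruence] algebra_simps)
  also have "\<dots> \<longleftrightarrow> D - ?S = t *\<^sub>R F"
    by (rule congruence_cancel[OF assms(1)])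
  finally show ?thesis by (auto simp: algebra_simps)
qed

definition matrix_pd ::
    "'k::finite \<Rightarrow> (real^'k \<Rightarrow> real^'m::finite^'n::finite) \<Rightarrow> real^'k \<Rightarrow> real^'m^'n" where
  "matrix_pd k A q = (\<chi> i j. pd k (\<lambda>q'. A q' $ i $ j) q)"

definition matrix_differentiable :: "(real^'k::finite \<Rightarrow> real^'m::finite^'n::finite) \<Rightarrow> real^'k \<Rightarrow> bool" where
  "matrix_differentiable A q \<longleftrightarrow> (\<forall>i j. (\<lambda>q'. A q' $ i $ j) differentiable (at q))"

lemma matrix_differentiable_of_smooth:
  "(\<And>i j. smooth_on U (ent F i j)) \<Longrightarrow> q \<in> U \<Longrightarrow> matrix_differentiable F q"
  unfolding matrix_differentiable_def ent_def by (blast intro: smooth_on_imp_differentiable)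

lemma matrix_differentiable_mult:
  fixes A :: "real^'k::finite \<Rightarrow> real^'m::finite^'n::finite" and B :: "real^'k \<Rightarrow> real^'l::finite^'m"
  shows "matrix_differentiable A q \<Longrightarrow> matrix_differentiable B q \<Longrightarrow>
    matrix_differentiable (\<lambda>q'. A q' ** B q') q"
  unfolding matrix_differentiable_def matrix_matrix_mult_def
  by (auto intro!: differentiable_sum differentiable_mult)

lemma matrix_pd_mult:
  fixes A :: "real^'k::finite \<Rightarrow> real^'m::finite^'n::finite" and B :: "real^'k \<Rightarrow> real^'l::finite^'m"
  assumes "matrix_differentiable A q" "matrix_differentiable B q"
  shows "matrix_pd k (\<lambda>q'. A q' ** B q') q = matrix_pd k A q ** B q + A q ** matrix_pd k B q"
proof -
  have "pd k (\<lambda>q'. \<Sum>l\<in>UNIV. A q' $ i $ l * B q' $ l $ j) q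
      = (\<Sum>l\<in>UNIV. A q $ i $ l * pd k (\<lambda>q'. B q' $ l $ j) q + pd k (\<lambda>q'. A q' $ i $ l) q * B q $ l $ j)"
    for i j
    using assms unfolding matrix_differentiable_def
    by (subst pd_sum) (auto intro!: differentiable_mult pd_mult sum.cong)
  then show ?thesis
    unfolding matrix_pd_def by (simp add: vec_eq_iff matrix_matrix_mult_def sum.distrib algebra_simps)
qed

lemma matrix_differentiable_transpose:
  "matrix_differentiable A q \<Longrightarrow> matrix_differentiable (\<lambda>q'. transpose (A q')) q"
  unfolding matrix_differentiable_def transpose_def by simp

lemma matrix_pd_transpose: "matrix_pd k (\<lambda>q'. transpose (A q')) q = transpose (matrix_pd k A q)"
  unfolding matrix_pd_def transpose_def by simp

lemma matrix_differentiable_Cbp: "matrix_differentiable (Cbp C b) q"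
  unfolding matrix_differentiable_def Cbp_def by simp

lemma matrix_pd_Cbp: "matrix_pd k (Cbp C b) q = outer b (axis k 1)"
proof -
  have "pd k (\<lambda>q. C$i$j + b$i * q$j) q = b$i * axis k 1 $ j" for i j
    by (simp add: pd_add pd_cmult pd_component axis_def)
  then show ?thesis
    by (simp add: vec_eq_iff matrix_pd_def outer_def Cbp_def)
qed

lemma matrix_pd_congruence:
  assumes "matrix_differentiable F q"
  shows "matrix_pd k (\<lambda>q. Cbp C b q ** F q ** transpose (Cbp C b q)) q
       = outer b (axis k 1) ** F q ** transpose (Cbp C b q)
         + Cbp C b q ** matrix_pd k F q ** transpose (Cbp C b q)
         + Cbp C b q ** F q ** transpose (outer b (axis k 1))"
  using assms
  by (simp add: matrix_pd_mult matrix_differentiable_mult matrix_differentiable_transpose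
      matrix_differentiable_Cbp matrix_pd_transpose matrix_pd_Cbp matrix_add_ldistrib
      matrix_add_rdistrib matrix_mul_assoc)

lemma matrix_pd_proportional:
  assumes "open V" "q \<in> V" "\<And>q. q \<in> V \<Longrightarrow> P q = \<nu> q *\<^sub>R K"
    and \<nu>: "\<nu> differentiable (at q)" "\<nu> q \<noteq> 0"
  shows "matrix_pd k P q = (pd k \<nu> q / \<nu> q) *\<^sub>R P q"
proof -
  have "pd k (\<lambda>q. P q $ i $ j) q = K$i$j * pd k \<nu> q" for i j
  proof -
    have "pd k (\<lambda>q. P q $ i $ j) q = pd k (\<lambda>q. K$i$j * \<nu> q) q"
      using assms(1-3) \<nu>(1) by (intro pd_cong_open) auto
    then show ?thesis using \<nu>(1) by (simp add: pd_cmult)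
  qed
  then show ?thesis
    using assms(2,3) \<nu>(2) unfolding matrix_pd_def by (simp add: vec_eq_iff)
qed

lemma proportional_factor:
  fixes P :: "real^'k::finite \<Rightarrow> real^'m::finite^'n::finite"
  assumes P: "\<And>q. q \<in> V \<Longrightarrow> P q = c q *\<^sub>R K" "\<And>q. q \<in> V \<Longrightarrow> P q \<noteq> 0"
    and P_diff: "\<And>q. q \<in> V \<Longrightarrow> matrix_differentiable P q" and "p \<in> V"
  obtains \<nu> where "\<And>q. q \<in> V \<Longrightarrow> P q = \<nu> q *\<^sub>R K" "\<And>q. q \<in> V \<Longrightarrow> \<nu> q \<noteq> 0"
    and "\<And>q. q \<in> V \<Longrightarrow> \<nu> differentiable (at q)"
proof -
  have "K \<noteq> 0" using P \<open>p \<in> V\<close> by auto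
  then obtain a a' where K: "K $ a $ a' \<noteq> 0"
    by (metis vec_eq_iff zero_index)
  define \<nu> where "\<nu> q = P q $ a $ a' / K $ a $ a'" for q
  have P_\<nu>: "P q = \<nu> q *\<^sub>R K" if "q \<in> V" for q
    using P(1)[OF that] K by (simp add: \<nu>_def)
  moreover have "\<nu> q \<noteq> 0" if "q \<in> V" for q
    using P_\<nu>[OF that] P(2)[OF that] by auto
  moreover have "\<nu> differentiable (at q)" if "q \<in> V" for q
    using P_diff[OF that] K unfolding \<nu>_def[abs_def] matrix_differentiable_def by simp
  ultimately show thesis by (rule that)
qed

section \<open>The coefficients \<open>s\<close>, \<open>c\<close> and \<open>a\<close>\<close>

text \<open>The shape of \<open>a\<^sub>i\<^sub>j\<^sub>k = 0\<close>: \<open>\<partial>\<^sub>k F = \<gamma>\<^sub>k F + \<sigma> F\<^sub>k\<^sup>t + F\<^sub>k \<sigma>\<^sup>t\<close>.\<close>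

definition derivative_normal_form ::
    "(real^'n \<Rightarrow> real^'n^'n) \<Rightarrow> ('n::finite \<Rightarrow> real) \<Rightarrow> real^'n \<Rightarrow> real^'n \<Rightarrow> bool" where
  "derivative_normal_form F \<gamma> \<sigma> p \<longleftrightarrow>
     (\<forall>k i j. pd k (ent F i j) p = \<gamma> k * F p$i$j + \<sigma>$i * F p$k$j + \<sigma>$j * F p$k$i)"

lemma derivative_normal_form_iff_matrix:
  assumes "transpose (F q) = F q"
  shows "derivative_normal_form F \<gamma> \<sigma> q \<longleftrightarrow>
    (\<forall>k. matrix_pd k F q = \<gamma> k *\<^sub>R F q + outer \<sigma> (column k (F q)) + outer (column k (F q)) \<sigma>)"
proof -
  have sym: "F q $ i $ j = F q $ j $ i" for i j
    using assms by (metis transpose_def vec_lambda_beta)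
  show ?thesis
    unfolding derivative_normal_form_def
    by (simp add: vec_eq_iff matrix_pd_def outer_def column_def ent_def sym[of _ k for k] mult.commute)
qed

lemma matrix_pd_congruence_iff_normal_form:
  assumes F: "matrix_differentiable F q" "transpose (F q) = F q"
    and M: "invertible (Cbp C b q)" "Cbp C b q *v \<sigma> = - b"
  shows "(\<forall>k. matrix_pd k (\<lambda>q. Cbp C b q ** F q ** transpose (Cbp C b q)) q
             = \<gamma> k *\<^sub>R (Cbp C b q ** F q ** transpose (Cbp C b q)))
     \<longleftrightarrow> derivative_normal_form F \<gamma> \<sigma> q"
  unfolding derivative_normal_form_iff_matrix[where F = F, OF F(2)] matrix_pd_congruence[OF F(1)]
    congruence_derivative_iff[OF M(1) F(2) M(2)] ..

lemma a_coef_zero_iff_normal_form: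
  "(\<forall>i j k. a_coef F i j k p = 0) \<longleftrightarrow>
     derivative_normal_form F (\<lambda>k. c_coef F k p + 2 * s_coef F k p) (\<chi> i. s_coef F i p) p"
  unfolding derivative_normal_form_def a_coef_def by (auto simp: algebra_simps)

definition inverse_contraction ::
    "(real^'n \<Rightarrow> real^'n^'n) \<Rightarrow> 'n::finite \<Rightarrow> real \<Rightarrow> real \<Rightarrow> real^'n \<Rightarrow> real" where
  "inverse_contraction F k \<alpha> \<beta> p = (\<Sum>i\<in>UNIV. \<Sum>j\<in>UNIV. matrix_inv (F p) $ i $ j *
      (\<alpha> * pd k (ent F i j) p - \<beta> * pd j (ent F i k) p))"

lemma s_coef_eq_contraction:
  "s_coef F k p = inverse_contraction F k 1 (real CARD('n)) p
     / ((real CARD('n) + 2) * (1 - real CARD('n)))"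
  for F :: "real^'n::finite \<Rightarrow> real^'n^'n"
  by (simp add: s_coef_def inverse_contraction_def Let_def)

lemma c_coef_eq_contraction:
  "c_coef F k p = inverse_contraction F k (real CARD('n) + 3) (2 * (real CARD('n) + 1)) p
     / ((real CARD('n) + 2) * (real CARD('n) - 1))"
  for F :: "real^'n::finite \<Rightarrow> real^'n^'n"
  by (simp add: c_coef_def inverse_contraction_def Let_def mult.assoc)

lemma differentiable_inverse_contraction:
  fixes F :: "real^'n::finite \<Rightarrow> real^'n^'n"
  assumes "open U" "q \<in> U" "\<And>i j. smooth_on U (ent F i j)" "\<And>p. p \<in> U \<Longrightarrow> invertible (F p)"
  shows "inverse_contraction F k \<alpha> \<beta> differentiable (at q)"
proof -
  have "(\<lambda>p. matrix_inv (F p) $ i $ j) differentiable (at q)" for i j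
    using assms smooth_on_imp_differentiable[OF assms(3)]
    by (intro differentiable_matrix_inv) (auto simp: ent_def)
  moreover have "pd l (ent F i j) differentiable (at q)" for l i j
    using smooth_on_imp_differentiable[OF smooth_on_pd[OF assms(3)] assms(2)] .
  ultimately show ?thesis
    unfolding inverse_contraction_def[abs_def]
    by (intro differentiable_sum ballI differentiable_mult differentiable_diff differentiable_const) auto
qed

lemma differentiable_s_coef:
  fixes F :: "real^'n::finite \<Rightarrow> real^'n^'n"
  assumes "CARD('n) \<ge> 2" "open U" "q \<in> U" "\<And>i j. smooth_on U (ent F i j)"
    and "\<And>p. p \<in> U \<Longrightarrow> invertible (F p)"
  shows "s_coef F k differentiable (at q)"
proof -
  have "s_coef F k = (\<lambda>p. inverse_contraction F k 1 (real CARD('n)) p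
      / ((real CARD('n) + 2) * (1 - real CARD('n))))"
    by (simp add: fun_eq_iff s_coef_eq_contraction)
  moreover have "(real CARD('n) + 2) * (1 - real CARD('n)) \<noteq> 0"
    using assms(1) by auto
  ultimately show ?thesis
    using differentiable_inverse_contraction[OF assms(2-5)] by (auto intro!: differentiable_divide)
qed

lemma differentiable_c_coef:
  fixes F :: "real^'n::finite \<Rightarrow> real^'n^'n"
  assumes "CARD('n) \<ge> 2" "open U" "q \<in> U" "\<And>i j. smooth_on U (ent F i j)"
    and "\<And>p. p \<in> U \<Longrightarrow> invertible (F p)"
  shows "c_coef F k differentiable (at q)"
proof -
  have "c_coef F k = (\<lambda>p. inverse_contraction F k (real CARD('n) + 3) (2 * (real CARD('n) + 1)) p
      / ((real CARD('n) + 2) * (real CARD('n) - 1)))"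
    by (simp add: fun_eq_iff c_coef_eq_contraction)
  moreover have "(real CARD('n) + 2) * (real CARD('n) - 1) \<noteq> 0"
    using assms(1) by auto
  ultimately show ?thesis
    using differentiable_inverse_contraction[OF assms(2-5)] by (auto intro!: differentiable_divide)
qed

lemma normal_form_contractions:
  fixes F G :: "real^'n::finite^'n" and D :: "'n \<Rightarrow> real^'n^'n"
  assumes sym: "\<And>i j. F$i$j = F$j$i" and GF: "G ** F = mat 1" and FG: "F ** G = mat 1"
    and D: "\<And>k i j. D k $ i $ j = \<gamma> k * F$i$j + \<sigma>$i * F$k$j + \<sigma>$j * F$k$i"
  shows "(\<Sum>i\<in>UNIV. \<Sum>j\<in>UNIV. G$i$j * D k $ i $ j) = real CARD('n) * \<gamma> k + 2 * \<sigma>$k"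
    and "(\<Sum>i\<in>UNIV. \<Sum>j\<in>UNIV. G$i$j * D j $ i $ k) = \<gamma> k + (real CARD('n) + 1) * \<sigma>$k"
proof -
  have GF': "(\<Sum>j\<in>UNIV. G$i$j * F$j$l) = (if i = l then 1 else 0)" for i l
    using arg_cong[OF GF, of "\<lambda>M. M$i$l"] by (simp add: matrix_matrix_mult_def mat_def)
  have FG': "(\<Sum>j\<in>UNIV. F$l$j * G$j$i) = (if l = i then 1 else 0)" for i l
    using arg_cong[OF FG, of "\<lambda>M. M$l$i"] by (simp add: matrix_matrix_mult_def mat_def)
  have contract_right: "(\<Sum>i\<in>UNIV. \<Sum>j\<in>UNIV. G$i$j * (x i * F$j$l)) = x l" for x l
    by (simp add: mult.left_commute[of _ "x _"] GF' flip: sum_distrib_left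
        cong: if_cong) (simp add: if_distrib[of "\<lambda>t. _ * t"] cong: if_cong)
  have contract_left: "(\<Sum>i\<in>UNIV. \<Sum>j\<in>UNIV. G$i$j * (x j * F$l$i)) = x l" for x l
  proof -
    have "(\<Sum>i\<in>UNIV. \<Sum>j\<in>UNIV. G$i$j * (x j * F$l$i)) = (\<Sum>j\<in>UNIV. x j * (\<Sum>i\<in>UNIV. F$l$i * G$i$j))"
      by (subst sum.swap) (simp add: sum_distrib_left mult_ac)
    then show ?thesis by (simp add: FG' if_distrib[of "\<lambda>t. _ * t"] cong: if_cong)
  qed
  have trace: "(\<Sum>i\<in>UNIV. \<Sum>j\<in>UNIV. G$i$j * (c * F$i$j)) = real CARD('n) * c" for c
  proof -
    have "(\<Sum>j\<in>UNIV. G$i$j * (c * F$i$j)) = c" for i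
      using GF'[of i i] by (simp add: sym[of i] mult_ac flip: sum_distrib_left)
    then show ?thesis by simp
  qed
  then have trace': "(\<Sum>i\<in>UNIV. \<Sum>j\<in>UNIV. G$i$j * (c * F$j$i)) = real CARD('n) * c" for c
    by (simp add: sym)
  show "(\<Sum>i\<in>UNIV. \<Sum>j\<in>UNIV. G$i$j * D k $ i $ j) = real CARD('n) * \<gamma> k + 2 * \<sigma>$k"
    using trace[of "\<gamma> k"] contract_right[of "\<lambda>i. \<sigma>$i" k] contract_left[of "\<lambda>j. \<sigma>$j" k]
    by (simp add: D distrib_left sum.distrib sym[of k] algebra_simps)
  show "(\<Sum>i\<in>UNIV. \<Sum>j\<in>UNIV. G$i$j * D j $ i $ k) = \<gamma> k + (real CARD('n) + 1) * \<sigma>$k"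
    using contract_left[of \<gamma> k] contract_right[of "\<lambda>i. \<sigma>$i" k] trace'[of "\<sigma>$k"]
    by (simp add: D distrib_left sum.distrib sym[of k] algebra_simps)
qed

lemma normal_form_coefficients:
  fixes F :: "real^'n::finite \<Rightarrow> real^'n^'n"
  assumes n2: "CARD('n) \<ge> 2" and sym: "transpose (F p) = F p" and inv: "invertible (F p)"
    and "derivative_normal_form F \<gamma> \<sigma> p"
  shows "s_coef F k p = \<sigma>$k" and "a_coef F i j k p = 0"
proof -
  let ?n = "real CARD('n)"
  have D: "pd k (ent F i j) p = \<gamma> k * F p$i$j + \<sigma>$i * F p$k$j + \<sigma>$j * F p$k$i" for k i j
    using assms(4) unfolding derivative_normal_form_def by blast
  have sym': "F p$i$j = F p$j$i" for i j
    using sym by (metis transpose_def vec_lambda_beta)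
  have contraction: "inverse_contraction F l \<alpha> \<beta> p
      = \<alpha> * (?n * \<gamma> l + 2 * \<sigma>$l) - \<beta> * (\<gamma> l + (?n + 1) * \<sigma>$l)" for l \<alpha> \<beta>
  proof -
    let ?D = "\<lambda>k. \<chi> i j. pd k (ent F i j) p"
    note traces = normal_form_contractions[OF sym' matrix_inv_mult(2,1)[OF inv], of ?D \<gamma> \<sigma>]
    have "inverse_contraction F l \<alpha> \<beta> p
        = \<alpha> * (\<Sum>i\<in>UNIV. \<Sum>j\<in>UNIV. matrix_inv (F p)$i$j * ?D l $ i $ j)
          - \<beta> * (\<Sum>i\<in>UNIV. \<Sum>j\<in>UNIV. matrix_inv (F p)$i$j * ?D j $ i $ l)"
      by (simp add: inverse_contraction_def sum_distrib_left sum_subtractf algebra_simps)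
    then show ?thesis using traces D by simp
  qed
  have "?n \<ge> 2" using n2 by simp
  then have nz: "?n + 2 \<noteq> 0" "1 - ?n \<noteq> 0" "?n - 1 \<noteq> 0" by auto
  have s: "s_coef F l p = \<sigma>$l" for l
  proof -
    have "1 * (?n * \<gamma> l + 2 * \<sigma>$l) - ?n * (\<gamma> l + (?n + 1) * \<sigma>$l) = (?n + 2) * (1 - ?n) * \<sigma>$l"
      by (simp add: algebra_simps)
    then show ?thesis
      unfolding s_coef_eq_contraction contraction using nz by simp
  qed
  have c: "c_coef F l p = \<gamma> l - 2 * \<sigma>$l" for l
  proof -
    have "(?n + 3) * (?n * \<gamma> l + 2 * \<sigma>$l) - 2 * (?n + 1) * (\<gamma> l + (?n + 1) * \<sigma>$l)
        = (?n + 2) * (?n - 1) * (\<gamma> l - 2 * \<sigma>$l)"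
      by (simp add: algebra_simps)
    then show ?thesis
      unfolding c_coef_eq_contraction contraction using nz by simp
  qed
  show "s_coef F k p = \<sigma>$k" by (rule s)
  show "a_coef F i j k p = 0"
    unfolding a_coef_def s c D using sym'[of k i] by (simp add: algebra_simps)
qed

section \<open>Uniqueness for first-order systems\<close>

lemma locally_bounded_components:
  fixes f :: "'i::finite \<Rightarrow> real^'n::finite \<Rightarrow> real"
  assumes "\<And>i. f i differentiable (at p0)"
  obtains d where "d > 0" "\<And>q. q \<in> ball p0 d \<Longrightarrow> norm (\<chi> i. f i q) \<le> norm (\<chi> i. f i p0) + 1"
proof -
  have "continuous (at p0) (f i)" for i
    using assms differentiable_imp_continuous_within by blast
  then have "((\<lambda>q. \<chi> i. f i q) \<longlongrightarrow> (\<chi> i. f i p0)) (at p0)"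
    by (intro tendsto_vec_lambda) (simp add: continuous_at)
  then have "continuous (at p0) (\<lambda>q. \<chi> i. f i q)"
    unfolding continuous_at by simp
  then obtain d where "d > 0" and d: "(\<lambda>q. \<chi> i. f i q) ` ball p0 d \<subseteq> ball (\<chi> i. f i p0) 1"
    unfolding continuous_at_ball by (meson zero_less_one)
  moreover have "norm (\<chi> i. f i q) \<le> norm (\<chi> i. f i p0) + 1" if "q \<in> ball p0 d" for q
    using d that norm_triangle_ineq2[of "\<chi> i. f i q" "\<chi> i. f i p0"]
    by (force simp: dist_norm norm_minus_commute)
  ultimately show ?thesis using that by blast
qed

text \<open>\<open>t \<mapsto> E(p\<^sub>0 + t v) exp(-L |v| t)\<close> is nonincreasing on \<open>[0, 1]\<close> and vanishes at \<open>0\<close>.\<close>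

lemma gronwall_zero_ball:
  fixes E :: "real^'n::finite \<Rightarrow> real"
  assumes diff: "\<And>q. q \<in> ball p0 r \<Longrightarrow> E differentiable (at q)"
    and nonneg: "\<And>q. q \<in> ball p0 r \<Longrightarrow> E q \<ge> 0" and "E p0 = 0"
    and grad: "\<And>q. q \<in> ball p0 r \<Longrightarrow> norm (\<chi> j. pd j E q) \<le> L * E q"
    and q: "q \<in> ball p0 r"
  shows "E q = 0"
proof -
  define v where "v = q - p0"
  define \<gamma> where "\<gamma> t = p0 + t *\<^sub>R v" for t
  define c where "c = L * norm v"
  define k where "k t = E (\<gamma> t) * exp (- c * t)" for t
  have \<gamma>_ball: "\<gamma> t \<in> ball p0 r" if "0 \<le> t" "t \<le> 1" for t
  proof -
    have "dist p0 (\<gamma> t) = t * norm v" unfolding \<gamma>_def dist_norm using that by simp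
    also have "\<dots> \<le> norm v" using that by (simp add: mult_left_le_one_le)
    also have "norm v < r" using q unfolding v_def by (simp add: dist_norm norm_minus_commute)
    finally show ?thesis by simp
  qed
  have "\<exists>y. DERIV k t :> y \<and> y \<le> 0" if t: "0 \<le> t" "t \<le> 1" for t
  proof -
    let ?grad = "\<chi> j. pd j E (\<gamma> t)"
    have "(\<gamma> has_derivative (\<lambda>s. s *\<^sub>R v)) (at t)"
      unfolding \<gamma>_def[abs_def] by (auto intro!: derivative_eq_intros)
    from has_derivative_compose[OF this has_derivative_pd[OF diff[OF \<gamma>_ball[OF t]]]]
    have "((\<lambda>t. E (\<gamma> t)) has_real_derivative inner v ?grad) (at t)"
      by (rule has_derivative_imp_has_field_derivative) (simp add: inner_vec_def sum_distrib_left mult_ac)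
    then have "DERIV k t :> exp (- c * t) * (inner v ?grad - c * E (\<gamma> t))"
      unfolding k_def by (auto intro!: derivative_eq_intros simp: algebra_simps)
    moreover have "inner v ?grad \<le> c * E (\<gamma> t)"
    proof -
      have "inner v ?grad \<le> norm v * norm ?grad" by (rule norm_cauchy_schwarz)
      also have "\<dots> \<le> norm v * (L * E (\<gamma> t))" by (intro mult_left_mono grad \<gamma>_ball t) simp
      finally show ?thesis by (simp add: c_def mult_ac)
    qed
    ultimately show ?thesis by (intro exI[of _ "exp (- c * t) * _"]) (auto simp: mult_nonneg_nonpos)
  qed
  then have "k 1 \<le> k 0" using DERIV_nonpos_imp_nonincreasing[of 0 1 k] by auto
  moreover have "k 0 = 0" unfolding k_def \<gamma>_def using \<open>E p0 = 0\<close> by simp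
  moreover have "k 1 \<ge> 0" unfolding k_def using nonneg[OF \<gamma>_ball[of 1]] by simp
  ultimately have "k 1 = 0" by simp
  then show ?thesis unfolding k_def \<gamma>_def v_def by simp
qed

lemma linear_pde_zero_ball:
  fixes h :: "real^'n::finite \<Rightarrow> real" and \<gamma> :: "'n \<Rightarrow> real^'n \<Rightarrow> real"
  assumes diff: "\<And>q. q \<in> ball p0 r \<Longrightarrow> h differentiable (at q)"
    and pde: "\<And>q k. q \<in> ball p0 r \<Longrightarrow> pd k h q = \<gamma> k q * h q"
    and bound: "\<And>q. q \<in> ball p0 r \<Longrightarrow> norm (\<chi> k. \<gamma> k q) \<le> G"
    and "h p0 = 0" and q: "q \<in> ball p0 r"
  shows "h q = 0"
proof -
  have "h q * h q = 0"
  proof (rule gronwall_zero_ball[where L = "2 * G", OF _ _ _ _ q])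
    fix q' assume q': "q' \<in> ball p0 r"
    show "(\<lambda>q. h q * h q) differentiable (at q')" using diff[OF q'] by simp
    show "h q' * h q' \<ge> 0" by simp
    have "(\<chi> j. pd j (\<lambda>q. h q * h q) q') = (2 * (h q' * h q')) *\<^sub>R (\<chi> k. \<gamma> k q')"
      using pd_mult[OF diff[OF q'] diff[OF q']] pde[OF q'] by (simp add: vec_eq_iff)
    then show "norm (\<chi> j. pd j (\<lambda>q. h q * h q) q') \<le> 2 * G * (h q' * h q')"
      using mult_left_mono[OF bound[OF q'], of "h q' * h q'"] by (simp add: mult_ac)
  qed (use \<open>h p0 = 0\<close> in simp)
  then show ?thesis by simp
qed

lemma norm_gradient_sum_squares:
  fixes X :: "'n::finite \<Rightarrow> real^'n \<Rightarrow> real"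
  assumes diff: "\<And>i. X i differentiable (at q)" and pde: "\<And>i j. pd j (X i) q = s i * X j q"
  shows "norm (\<chi> j. pd j (\<lambda>q. \<Sum>i\<in>UNIV. X i q * X i q) q)
    \<le> 2 * norm (\<chi> i. s i) * (\<Sum>i\<in>UNIV. X i q * X i q)"
proof -
  define Xv where "Xv = (\<chi> i. X i q)"
  have "pd j (\<lambda>q. \<Sum>i\<in>UNIV. X i q * X i q) q = (\<Sum>i\<in>UNIV. 2 * X i q * pd j (X i) q)" for j
    using diff by (simp add: pd_sum pd_mult algebra_simps)
  then have "(\<chi> j. pd j (\<lambda>q. \<Sum>i\<in>UNIV. X i q * X i q) q) = (2 * inner Xv (\<chi> i. s i)) *\<^sub>R Xv"
    by (simp add: vec_eq_iff pde Xv_def inner_vec_def sum_distrib_left sum_distrib_right mult_ac)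
  then have "norm (\<chi> j. pd j (\<lambda>q. \<Sum>i\<in>UNIV. X i q * X i q) q) = 2 * \<bar>inner Xv (\<chi> i. s i)\<bar> * norm Xv"
    by (simp add: abs_mult)
  also have "\<dots> \<le> 2 * (norm Xv * norm (\<chi> i. s i)) * norm Xv"
    by (intro mult_right_mono mult_left_mono Cauchy_Schwarz_ineq2) auto
  also have "\<dots> = 2 * norm (\<chi> i. s i) * inner Xv Xv"
    by (simp add: dot_square_norm power2_eq_square)
  also have "inner Xv Xv = (\<Sum>i\<in>UNIV. X i q * X i q)"
    by (simp add: Xv_def inner_vec_def)
  finally show ?thesis .
qed

text \<open>\<open>X\<^sub>i = \<psi> s\<^sub>i - s\<^sub>i(p\<^sub>0)\<close>, \<open>\<psi>\<close> the affine denominator, solves the linear system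
  \<open>\<partial>\<^sub>j X\<^sub>i = s\<^sub>i X\<^sub>j\<close> and vanishes at \<open>p\<^sub>0\<close>.\<close>

lemma riccati_solution_ball:
  fixes s :: "'n::finite \<Rightarrow> real^'n \<Rightarrow> real"
  assumes diff: "\<And>q i. q \<in> ball p0 r \<Longrightarrow> s i differentiable (at q)"
    and flat: "\<And>q i j. q \<in> ball p0 r \<Longrightarrow> pd j (s i) q = s i q * s j q"
    and bound: "\<And>q. q \<in> ball p0 r \<Longrightarrow> norm (\<chi> i. s i q) \<le> S"
    and q: "q \<in> ball p0 r"
  shows "(1 - inner (\<chi> i. s i p0) (q - p0)) * s i q = s i p0"
proof -
  define s0 where "s0 = (\<chi> i. s i p0)"
  define \<psi> where "\<psi> q = 1 - inner s0 (q - p0)" for q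
  have \<psi>_diff: "\<psi> differentiable (at q)" for q
    unfolding \<psi>_def[abs_def] by (auto intro!: derivative_intros)
  have "(\<psi> has_derivative (\<lambda>h. - inner s0 h)) (at q)" for q
    unfolding \<psi>_def[abs_def] by (auto intro!: derivative_eq_intros)
  from pd_eqI[OF this] have \<psi>_pd: "pd j \<psi> q = - s0$j" for j q
    by (simp add: inner_axis)
  define X where "X i q = \<psi> q * s i q - s0$i" for i q
  have X_diff: "X i differentiable (at q)" if "q \<in> ball p0 r" for i q
    unfolding X_def[abs_def] using \<psi>_diff diff[OF that] by simp
  have X_pd: "pd j (X i) q = s i q * X j q" if q: "q \<in> ball p0 r" for i j q
  proof -
    have "pd j (X i) q = pd j (\<lambda>q. \<psi> q * s i q) q - pd j (\<lambda>q. s0$i) q"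
      unfolding X_def[abs_def] using \<psi>_diff diff[OF q] by (simp add: pd_diff)
    also have "\<dots> = \<psi> q * (s i q * s j q) - s0$j * s i q"
      using pd_mult[OF \<psi>_diff diff[OF q]] flat[OF q] \<psi>_pd by simp
    finally show ?thesis unfolding X_def by (simp add: algebra_simps)
  qed
  define E where "E q = (\<Sum>i\<in>UNIV. X i q * X i q)" for q
  have "E q = 0"
  proof (rule gronwall_zero_ball[where L = "2 * S", OF _ _ _ _ q])
    fix q' assume q': "q' \<in> ball p0 r"
    show "E differentiable (at q')"
      unfolding E_def[abs_def] using X_diff[OF q'] by (intro differentiable_sum) auto
    show E_nonneg: "E q' \<ge> 0" unfolding E_def by (auto intro: sum_nonneg)
    have "norm (\<chi> j. pd j E q') \<le> 2 * norm (\<chi> i. s i q') * E q'"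
      unfolding E_def[abs_def] using X_diff[OF q'] X_pd[OF q'] by (rule norm_gradient_sum_squares)
    also have "\<dots> \<le> 2 * S * E q'"
      using bound[OF q'] E_nonneg by (intro mult_right_mono) auto
    finally show "norm (\<chi> j. pd j E q') \<le> 2 * S * E q'" .
  qed (simp add: E_def X_def \<psi>_def s0_def)
  then have "X i q * X i q = 0"
    unfolding E_def by (subst (asm) sum_nonneg_eq_0_iff) auto
  then show ?thesis unfolding X_def \<psi>_def s0_def by simp
qed

lemma riccati_solution_near:
  fixes s :: "'n::finite \<Rightarrow> real^'n \<Rightarrow> real"
  assumes U: "open U" "p0 \<in> U" and diff: "\<And>q i. q \<in> U \<Longrightarrow> s i differentiable (at q)"
    and flat: "\<And>q i j. q \<in> U \<Longrightarrow> pd j (s i) q = s i q * s j q"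
  obtains r where "r > 0" "ball p0 r \<subseteq> U"
    and "\<And>q. q \<in> ball p0 r \<Longrightarrow> 1 - inner (\<chi> i. s i p0) (q - p0) > 0"
    and "\<And>q i. q \<in> ball p0 r \<Longrightarrow> (1 - inner (\<chi> i. s i p0) (q - p0)) * s i q = s i p0"
proof -
  let ?s0 = "\<chi> i. s i p0"
  obtain r0 where r0: "r0 > 0" "ball p0 r0 \<subseteq> U"
    using U open_contains_ball by blast
  obtain d where d: "d > 0" "\<And>q. q \<in> ball p0 d \<Longrightarrow> norm (\<chi> i. s i q) \<le> norm ?s0 + 1"
    using locally_bounded_components[of s p0] diff U(2) by blast
  define r where "r = min r0 (min d (1 / (norm ?s0 + 1)))"
  have r: "r > 0"
    using r0 d by (simp add: r_def add_nonneg_pos)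
  have ball_r: "ball p0 r \<subseteq> U" "ball p0 r \<subseteq> ball p0 d"
    using r0 unfolding r_def by auto
  have pos: "1 - inner ?s0 (q - p0) > 0" if "q \<in> ball p0 r" for q
  proof -
    have "inner ?s0 (q - p0) \<le> norm ?s0 * norm (q - p0)"
      by (rule norm_cauchy_schwarz)
    also have "\<dots> \<le> norm ?s0 * (1 / (norm ?s0 + 1))"
      using that by (intro mult_left_mono) (auto simp: r_def dist_norm norm_minus_commute)
    also have "\<dots> < 1"
    proof -
      have "0 < norm ?s0 + 1" by (simp add: add_nonneg_pos)
      then show ?thesis by (simp add: divide_less_eq)
    qed
    finally show ?thesis by simp
  qed
  have sol: "(1 - inner ?s0 (q - p0)) * s i q = s i p0" if "q \<in> ball p0 r" for q i
  proof (rule riccati_solution_ball[where S = "norm ?s0 + 1", OF _ _ _ that])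
    fix q' i' j assume "q' \<in> ball p0 r"
    then have "q' \<in> U" "q' \<in> ball p0 d" using ball_r by auto
    then show "s i' differentiable (at q')" "pd j (s i') q' = s i' q' * s j q'"
      and "norm (\<chi> i. s i q') \<le> norm ?s0 + 1"
      using diff flat d(2) by auto
  qed
  show thesis
    by (rule that[OF r ball_r(1) pos sol])
qed

lemma proportional_to_initial_near:
  fixes P :: "real^'n::finite \<Rightarrow> real^'m::finite^'l::finite" and \<gamma> :: "'n \<Rightarrow> real^'n \<Rightarrow> real"
  assumes V: "open V" "p0 \<in> V" and P_diff: "\<And>q. q \<in> V \<Longrightarrow> matrix_differentiable P q"
    and \<gamma>_diff: "\<And>k. \<gamma> k differentiable (at p0)"
    and P_pd: "\<And>q k. q \<in> V \<Longrightarrow> matrix_pd k P q = \<gamma> k q *\<^sub>R P q"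
    and "P p0 \<noteq> 0"
  obtains r \<nu> where "r > 0" "ball p0 r \<subseteq> V" and "\<And>q. q \<in> ball p0 r \<Longrightarrow> P q = \<nu> q *\<^sub>R P p0"
proof -
  obtain a a' where a: "P p0 $ a $ a' \<noteq> 0"
    using \<open>P p0 \<noteq> 0\<close> by (metis vec_eq_iff zero_index)
  obtain r0 where r0: "r0 > 0" "ball p0 r0 \<subseteq> V"
    using V open_contains_ball by blast
  obtain d where d: "d > 0" "\<And>q. q \<in> ball p0 d \<Longrightarrow> norm (\<chi> k. \<gamma> k q) \<le> norm (\<chi> k. \<gamma> k p0) + 1"
    using locally_bounded_components[of \<gamma> p0] \<gamma>_diff by blast
  define r where "r = min r0 d"
  have ball_r: "ball p0 r \<subseteq> V" "ball p0 r \<subseteq> ball p0 d"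
    using r0 unfolding r_def by auto
  have entry_diff: "(\<lambda>q. P q $ i $ j) differentiable (at q)" if "q \<in> ball p0 r" for i j q
    using P_diff ball_r(1) that unfolding matrix_differentiable_def by blast
  have entry_pd: "pd k (\<lambda>q. P q $ i $ j) q = \<gamma> k q * P q $ i $ j" if "q \<in> ball p0 r" for i j k q
    using P_pd[of q k, THEN arg_cong[where f = "\<lambda>X. X $ i $ j"]] ball_r(1) that
    by (auto simp: matrix_pd_def)
  have cross: "P p0 $ a $ a' * P q $ i $ j - P p0 $ i $ j * P q $ a $ a' = 0" if q: "q \<in> ball p0 r" for q i j
  proof (rule linear_pde_zero_ball[OF _ _ _ _ q])
    fix q' assume q': "q' \<in> ball p0 r"
    show "(\<lambda>q. P p0 $ a $ a' * P q $ i $ j - P p0 $ i $ j * P q $ a $ a') differentiable (at q')"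
      using entry_diff[OF q'] by simp
    show "pd k (\<lambda>q. P p0 $ a $ a' * P q $ i $ j - P p0 $ i $ j * P q $ a $ a') q'
        = \<gamma> k q' * (P p0 $ a $ a' * P q' $ i $ j - P p0 $ i $ j * P q' $ a $ a')" for k
    proof -
      have "pd k (\<lambda>q. P p0 $ a $ a' * P q $ i $ j - P p0 $ i $ j * P q $ a $ a') q'
          = P p0 $ a $ a' * pd k (\<lambda>q. P q $ i $ j) q' - P p0 $ i $ j * pd k (\<lambda>q. P q $ a $ a') q'"
        using entry_diff[OF q'] by (simp add: pd_diff pd_cmult)
      then show ?thesis by (simp add: entry_pd[OF q'] algebra_simps)
    qed
    show "norm (\<chi> k. \<gamma> k q') \<le> norm (\<chi> k. \<gamma> k p0) + 1"
      using d(2) ball_r(2) q' by blast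
  qed simp
  define \<nu> where "\<nu> q = P q $ a $ a' / P p0 $ a $ a'" for q
  have entrywise: "P q $ i $ j = \<nu> q * P p0 $ i $ j" if "q \<in> ball p0 r" for q i j
  proof -
    have "P q $ i $ j = P p0 $ a $ a' * P q $ i $ j / P p0 $ a $ a'"
      using a by simp
    also have "\<dots> = P p0 $ i $ j * P q $ a $ a' / P p0 $ a $ a'"
      using cross[OF that, of i j] by simp
    finally show ?thesis by (simp add: \<nu>_def)
  qed
  have "P q = \<nu> q *\<^sub>R P p0" if "q \<in> ball p0 r" for q
    using entrywise[OF that] by (simp add: vec_eq_iff)
  moreover have "r > 0" using r0 d by (simp add: r_def)
  ultimately show thesis using ball_r(1) that by blast
qed

section \<open>Necessity\<close>

text \<open>\<open>\<sigma> = -(C + b p)\<^sup>-\<^sup>1 b\<close>; it is the vector \<open>s\<close> of every \<open>F\<close> that \<open>(C, b)\<close> linearizes.\<close>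

definition s_of_transformation :: "real^'n^'n \<Rightarrow> real^'n \<Rightarrow> real^'n::finite \<Rightarrow> real^'n" where
  "s_of_transformation C b q = matrix_inv (Cbp C b q) *v (- b)"

lemma Cbp_mult_s_of_transformation:
  "invertible (Cbp C b q) \<Longrightarrow> Cbp C b q *v s_of_transformation C b q = - b"
  by (simp add: s_of_transformation_def matrix_vector_mul_assoc matrix_inv_mult(1))

lemma differentiable_s_of_transformation:
  assumes "open V" "q \<in> V" "\<And>q. q \<in> V \<Longrightarrow> invertible (Cbp C b q)"
  shows "(\<lambda>q. s_of_transformation C b q $ i) differentiable (at q)"
proof -
  have "(\<lambda>q. matrix_inv (Cbp C b q) $ i $ l) differentiable (at q)" for l
    using assms by (intro differentiable_matrix_inv) (auto simp: Cbp_def)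
  then show ?thesis
    unfolding s_of_transformation_def matrix_vector_mult_def by simp
qed

lemma pd_s_of_transformation:
  assumes V: "open V" "p \<in> V" and inv: "\<And>q. q \<in> V \<Longrightarrow> invertible (Cbp C b q)"
  shows "pd j (\<lambda>q. s_of_transformation C b q $ i) p
           = s_of_transformation C b p $ j * s_of_transformation C b p $ i"
proof -
  let ?M = "Cbp C b" and ?\<sigma> = "s_of_transformation C b"
  let ?d = "\<chi> l. pd j (\<lambda>q. ?\<sigma> q $ l) p"
  have \<sigma>_diff: "(\<lambda>q. ?\<sigma> q $ l) differentiable (at p)" for l
    using differentiable_s_of_transformation[OF V inv] .
  have row: "(?M p *v ?d) $ r + b$r * ?\<sigma> p $ j = 0" for r
  proof -
    have "(\<Sum>l\<in>UNIV. ?M q $ r $ l * ?\<sigma> q $ l) = - b$r" if "q \<in> V" for q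
      using arg_cong[OF Cbp_mult_s_of_transformation[OF inv[OF that]], of "\<lambda>v. v $ r"]
      by (simp add: matrix_vector_mult_def)
    then have "pd j (\<lambda>q. \<Sum>l\<in>UNIV. ?M q $ r $ l * ?\<sigma> q $ l) p = pd j (\<lambda>q. - b$r) p"
      using V by (intro pd_cong_open) auto
    moreover have "pd j (\<lambda>q. \<Sum>l\<in>UNIV. ?M q $ r $ l * ?\<sigma> q $ l) p
        = (\<Sum>l\<in>UNIV. ?M p $ r $ l * pd j (\<lambda>q. ?\<sigma> q $ l) p + pd j (\<lambda>q. ?M q $ r $ l) p * ?\<sigma> p $ l)"
      using \<sigma>_diff by (simp add: pd_sum pd_mult Cbp_def)
    moreover have "pd j (\<lambda>q. ?M q $ r $ l) p = b$r * axis j 1 $ l" for l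
      using matrix_pd_Cbp[of j C b p] by (simp add: vec_eq_iff matrix_pd_def outer_def)
    ultimately show ?thesis
      by (simp add: matrix_vector_mult_def sum.distrib mult.assoc flip: sum_distrib_left)
  qed
  have "(?M p *v ?\<sigma> p) $ r = - b$r" for r
    using Cbp_mult_s_of_transformation[OF inv[OF V(2)]] by simp
  moreover have "(?M p *v ?d) $ r = - (b$r * ?\<sigma> p $ j)" for r
    using row[of r] by linarith
  ultimately have "?M p *v ?d = ?M p *v (?\<sigma> p $ j *\<^sub>R ?\<sigma> p)"
    by (simp add: vec_eq_iff matrix_vector_mult_scaleR)
  then have "?d = ?\<sigma> p $ j *\<^sub>R ?\<sigma> p"
    using inj_matrix_vector_mult[OF inv[OF V(2)]] by (simp add: inj_eq)
  then show ?thesis by (simp add: vec_eq_iff)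
qed

lemma linearizable_at_normal_form:
  fixes F :: "real^'n::finite \<Rightarrow> real^'n^'n"
  assumes sm: "\<And>i j. smooth_on U (ent F i j)"
    and sym: "\<And>p. p \<in> U \<Longrightarrow> transpose (F p) = F p"
    and inv: "\<And>p. p \<in> U \<Longrightarrow> invertible (F p)"
    and "linearizable_at F U p0"
  obtains V C b \<gamma> where "open V" "p0 \<in> V" "V \<subseteq> U" "\<And>q. q \<in> V \<Longrightarrow> invertible (Cbp C b q)"
    and "\<And>q. q \<in> V \<Longrightarrow> derivative_normal_form F (\<gamma> q) (s_of_transformation C b q) q"
proof -
  obtain V C b c \<beta> lam K where V: "open V" "p0 \<in> V" "V \<subseteq> U"
    and tr: "\<And>q. q \<in> V \<Longrightarrow> det (Cbp C b q) \<noteq> 0 \<and> transformed_coef C b F q = lam q *\<^sub>R K"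
    using assms(4) unfolding linearizable_at_def by blast
  define P where "P q = Cbp C b q ** F q ** transpose (Cbp C b q)" for q
  have M_inv: "invertible (Cbp C b q)" if "q \<in> V" for q
    using tr[OF that] invertible_det_nz by blast
  have F_diff: "matrix_differentiable F q" if "q \<in> V" for q
    using matrix_differentiable_of_smooth[OF sm] that V(3) by blast
  have P_nonzero: "P q \<noteq> 0" if "q \<in> V" for q
  proof -
    have "q \<in> U" using that V(3) by blast
    then show ?thesis
      unfolding P_def by (intro invertible_imp_nonzero invertible_congruence M_inv[OF that] inv)
  qed
  have P_K: "P q = (lam q / det (Cbp C b q)) *\<^sub>R K" if "q \<in> V" for q
    using tr[OF that] unfolding transformed_coef_def P_def
    by (metis (no_types, lifting) divide_inverse_commute inverse_eq_divide scaleR_scaleR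
        scaleR_one right_inverse mult.commute)
  have P_diff: "matrix_differentiable P q" if "q \<in> V" for q
    unfolding P_def[abs_def] using F_diff[OF that]
    by (intro matrix_differentiable_mult matrix_differentiable_transpose matrix_differentiable_Cbp)
  obtain \<nu> where \<nu>: "\<And>q. q \<in> V \<Longrightarrow> P q = \<nu> q *\<^sub>R K"
    "\<And>q. q \<in> V \<Longrightarrow> \<nu> q \<noteq> 0" "\<And>q. q \<in> V \<Longrightarrow> \<nu> differentiable (at q)"
    using proportional_factor[OF P_K P_nonzero P_diff V(2)] by blast
  show ?thesis
  proof (rule that[OF V M_inv])
    fix q assume q: "q \<in> V"
    then have qU: "q \<in> U" using V(3) by blast
    have "matrix_pd k P q = (pd k \<nu> q / \<nu> q) *\<^sub>R P q" for k
      using matrix_pd_proportional[OF V(1) q \<nu>(1) \<nu>(3)[OF q] \<nu>(2)[OF q]] .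
    then show "derivative_normal_form F (\<lambda>k. pd k \<nu> q / \<nu> q) (s_of_transformation C b q) q"
      using matrix_pd_congruence_iff_normal_form[OF F_diff[OF q] sym[OF qU]
          M_inv[OF q] Cbp_mult_s_of_transformation[OF M_inv[OF q]],
          where \<gamma> = "\<lambda>k. pd k \<nu> q / \<nu> q", folded P_def] by blast
  qed
qed

lemma linearizable_at_imp_conditions:
  fixes F :: "real^'n::finite \<Rightarrow> real^'n^'n"
  assumes n2: "CARD('n) \<ge> 2" and sm: "\<And>i j. smooth_on U (ent F i j)"
    and sym: "\<And>p. p \<in> U \<Longrightarrow> transpose (F p) = F p"
    and inv: "\<And>p. p \<in> U \<Longrightarrow> invertible (F p)"
    and "linearizable_at F U p0"
  shows "(\<forall>i j k. a_coef F i j k p0 = 0) \<and>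
         (\<forall>i j. pd j (s_coef F i) p0 - s_coef F i p0 * s_coef F j p0 = 0)"
proof -
  obtain V C b \<gamma> where V: "open V" "p0 \<in> V" "V \<subseteq> U"
    and M_inv: "\<And>q. q \<in> V \<Longrightarrow> invertible (Cbp C b q)"
    and nf: "\<And>q. q \<in> V \<Longrightarrow> derivative_normal_form F (\<gamma> q) (s_of_transformation C b q) q"
    using linearizable_at_normal_form[OF sm sym inv assms(5)] by blast
  have s: "s_coef F i q = s_of_transformation C b q $ i" if "q \<in> V" for i q
    using normal_form_coefficients(1)[OF n2 sym inv nf] that V(3) by blast
  have "a_coef F i j k p0 = 0" for i j k
    using normal_form_coefficients(2)[OF n2 sym inv nf] V by blast
  moreover have "pd j (s_coef F i) p0 = s_coef F j p0 * s_coef F i p0" for i j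
  proof -
    have "pd j (s_coef F i) p0 = pd j (\<lambda>q. s_of_transformation C b q $ i) p0"
      using V s differentiable_s_of_transformation[OF V(1,2) M_inv] by (intro pd_cong_open) auto
    then show ?thesis
      using pd_s_of_transformation[OF V(1,2) M_inv] s[OF V(2)] by simp
  qed
  ultimately show ?thesis by (simp add: mult.commute)
qed

section \<open>Sufficiency\<close>

text \<open>\<open>C w = \<alpha> w\<close>; for \<open>w = 0\<close> the division yields \<open>0\<close>, which is harmless.\<close>

definition normalizing_matrix :: "real^'n::finite \<Rightarrow> real \<Rightarrow> real^'n^'n" where
  "normalizing_matrix w \<alpha> = mat 1 + ((\<alpha> - 1) / inner w w) *\<^sub>R outer w w"

lemma rank_one_update_mult_vector:
  "(mat 1 + x *\<^sub>R outer w w) *v u = u + (x * inner w u) *\<^sub>R w"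
  by (simp add: vec_eq_iff matrix_vector_mult_def outer_def mat_def inner_vec_def
      sum.distrib sum_distrib_left algebra_simps if_distrib[of "\<lambda>t. _ * t"] cong: if_cong)

lemma Cbp_mult_vector: "Cbp C b q *v u = C *v u + inner q u *\<^sub>R b"
  by (simp add: vec_eq_iff matrix_vector_mult_def Cbp_def inner_vec_def
      sum.distrib sum_distrib_left algebra_simps)

lemma normalizing_Cbp_eigenvector:
  "Cbp (normalizing_matrix w \<alpha>) w q *v w = (\<alpha> + inner w q) *\<^sub>R w"
proof (cases "w = 0")
  case False
  then have "(\<alpha> - 1) / inner w w * inner w w = \<alpha> - 1" by simp
  then have "Cbp (normalizing_matrix w \<alpha>) w q *v w = w + (\<alpha> - 1 + inner q w) *\<^sub>R w"
    unfolding normalizing_matrix_def Cbp_mult_vector rank_one_update_mult_vector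
    by (simp add: scaleR_add_left)
  also have "\<dots> = (\<alpha> + inner w q) *\<^sub>R w" by (simp add: inner_commute algebra_simps)
  finally show ?thesis .
qed simp

lemma invertible_normalizing_Cbp:
  assumes "\<alpha> + inner w q \<noteq> 0"
  shows "invertible (Cbp (normalizing_matrix w \<alpha>) w q)"
proof -
  let ?M = "Cbp (normalizing_matrix w \<alpha>) w q"
  have "u = 0" if u: "?M *v u = 0" for u
  proof -
    obtain c where "u + c *\<^sub>R w = 0"
      using u unfolding normalizing_matrix_def Cbp_mult_vector rank_one_update_mult_vector
      by (metis add.assoc scaleR_add_left)
    then have uw: "u = (- c) *\<^sub>R w" by (simp add: eq_neg_iff_add_eq_0)
    have "0 = (- c) *\<^sub>R (?M *v w)"
      using u unfolding uw matrix_vector_mult_scaleR by simp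
    also have "\<dots> = (- c * (\<alpha> + inner w q)) *\<^sub>R w"
      by (simp add: normalizing_Cbp_eigenvector)
    finally have "c = 0 \<or> w = 0" using assms by simp
    with uw show ?thesis by auto
  qed
  then show ?thesis
    using matrix_left_invertible_ker invertible_left_inverse by blast
qed

lemma sum_UNIV_plus_unit:
  "(\<Sum>r\<in>(UNIV::('a::finite + unit) set). f r) = (\<Sum>j\<in>UNIV. f (Inl j)) + f (Inr ())"
proof -
  have "(\<Sum>r\<in>(UNIV::('a + unit) set). f r) = (\<Sum>r\<in>UNIV <+> UNIV. f r)" by simp
  also have "\<dots> = (\<Sum>j\<in>UNIV. f (Inl j)) + (\<Sum>j\<in>(UNIV::unit set). f (Inr j))"
    by (subst sum.Plus) auto
  finally show ?thesis by (simp add: UNIV_unit)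
qed

lemma det_block_mat_scale_last_row:
  "det (block_mat C b (t *\<^sub>R c) (t * \<beta>)) = t * det (block_mat C b c \<beta>)"
proof -
  let ?N = "block_mat C b c \<beta>"
  have "block_mat C b (t *\<^sub>R c) (t * \<beta>) = (\<chi> r. if r = Inr () then t *s ?N $ r else ?N $ r)"
    by (simp add: vec_eq_iff block_mat_def split: sum.split)
  then show ?thesis
    using det_row_mul[of "Inr ()" t "\<lambda>r. ?N $ r" "\<lambda>r. ?N $ r"] by simp
qed

lemma normalizing_matrix_extends_to_SL:
  "\<exists>c \<beta>. det (block_mat (normalizing_matrix w \<alpha>) w c \<beta>) = 1"
proof -
  define x where "x = (\<alpha> - 1) / inner w w"
  txt \<open>The extension with last row \<open>(w, \<beta>\<^sub>0)\<close> is invertible; rescaling that row normalizes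
    the determinant.\<close>
  define \<beta>0 :: real where "\<beta>0 = (if w = 0 then 1 else 0)"
  define N where "N = block_mat (normalizing_matrix w \<alpha>) w w \<beta>0"
  have "v = 0" if v: "N *v v = 0" for v
  proof -
    define u where "u = (\<chi> j. v $ Inl j)"
    define t where "t = v $ Inr ()"
    have "(N *v v) $ Inl i = (normalizing_matrix w \<alpha> *v u) $ i + t * w$i" for i
      by (simp add: matrix_vector_mult_def sum_UNIV_plus_unit N_def block_mat_def u_def t_def)
    then have "normalizing_matrix w \<alpha> *v u + t *\<^sub>R w = 0"
      using v by (simp add: vec_eq_iff)
    then have top: "u + (x * inner w u + t) *\<^sub>R w = 0"
      unfolding normalizing_matrix_def rank_one_update_mult_vector x_def[symmetric]
      by (simp add: scaleR_add_left add.assoc)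
    have "(N *v v) $ Inr () = inner w u + \<beta>0 * t"
      by (simp add: matrix_vector_mult_def sum_UNIV_plus_unit N_def block_mat_def u_def t_def
          inner_vec_def)
    then have bottom: "inner w u + \<beta>0 * t = 0" using v by simp
    have "u = 0 \<and> t = 0"
    proof (cases "w = 0")
      case True
      then show ?thesis using top bottom by (simp add: \<beta>0_def)
    next
      case False
      have uw: "u = - (x * inner w u + t) *\<^sub>R w"
        using top by (simp only: scaleR_minus_left eq_neg_iff_add_eq_0)
      then have "inner w u = - (x * inner w u + t) * inner w w"
        by (metis inner_scaleR_right)
      with bottom False have "x * inner w u + t = 0" by (simp add: \<beta>0_def)
      with uw top False show ?thesis by simp
    qed
    then show "v = 0"
      unfolding u_def t_def vec_eq_iff by (metis sum.exhaust old.unit.exhaust vec_lambda_beta zero_index)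
  qed
  then have "det N \<noteq> 0"
    using matrix_left_invertible_ker invertible_left_inverse invertible_det_nz by blast
  then have "det (block_mat (normalizing_matrix w \<alpha>) w ((1 / det N) *\<^sub>R w) ((1 / det N) * \<beta>0)) = 1"
    unfolding det_block_mat_scale_last_row N_def by simp
  then show ?thesis by blast
qed

text \<open>For the solution \<open>\<sigma> = s\<^sub>0 / \<psi>\<close>, \<open>\<psi>(p) = 1 - s\<^sub>0\<cdot>(p - p\<^sub>0)\<close>, of the Riccati system: with
  \<open>w = -s\<^sub>0\<close> and \<open>\<alpha> = 1 + s\<^sub>0\<cdot>p\<^sub>0\<close> one has \<open>(C + w p) w = \<psi>(p) w\<close>, hence \<open>(C + w p) \<sigma> = -w\<close>.\<close>

lemma normalizing_transformation:
  assumes \<psi>: "1 - inner s0 (q - p0) > 0" and \<sigma>: "(1 - inner s0 (q - p0)) *\<^sub>R \<sigma> = s0"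
  shows "invertible (Cbp (normalizing_matrix (- s0) (1 + inner s0 p0)) (- s0) q)"
    and "Cbp (normalizing_matrix (- s0) (1 + inner s0 p0)) (- s0) q *v \<sigma> = s0"
proof -
  let ?M = "Cbp (normalizing_matrix (- s0) (1 + inner s0 p0)) (- s0) q"
  have eigen: "1 + inner s0 p0 + inner (- s0) q = 1 - inner s0 (q - p0)"
    by (simp add: inner_diff_right)
  show "invertible ?M"
    using invertible_normalizing_Cbp[of "1 + inner s0 p0" "- s0" q] \<psi> eigen by simp
  have "\<sigma> = (1 / (1 - inner s0 (q - p0))) *\<^sub>R ((1 - inner s0 (q - p0)) *\<^sub>R \<sigma>)"
    using \<psi> by simp
  then have "\<sigma> = (- 1 / (1 - inner s0 (q - p0))) *\<^sub>R (- s0)"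
    unfolding \<sigma> by simp
  then have "?M *v \<sigma> = (- 1 / (1 - inner s0 (q - p0))) *\<^sub>R (?M *v (- s0))"
    by (simp only: matrix_vector_mult_scaleR)
  also have "\<dots> = s0"
    unfolding normalizing_Cbp_eigenvector eigen using \<psi> by simp
  finally show "?M *v \<sigma> = s0" .
qed

lemma normal_form_imp_linearizable_at:
  fixes F :: "real^'n::finite \<Rightarrow> real^'n^'n"
  assumes V: "open V" "p0 \<in> V" "V \<subseteq> U"
    and F_diff: "\<And>q. q \<in> V \<Longrightarrow> matrix_differentiable F q"
    and sym: "\<And>q. q \<in> V \<Longrightarrow> transpose (F q) = F q" and "invertible (F p0)"
    and M: "\<And>q. q \<in> V \<Longrightarrow> invertible (Cbp C b q)" "\<And>q. q \<in> V \<Longrightarrow> Cbp C b q *v \<sigma> q = - b"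
    and nf: "\<And>q. q \<in> V \<Longrightarrow> derivative_normal_form F (\<lambda>k. \<gamma> k q) (\<sigma> q) q"
    and \<gamma>_diff: "\<And>k. \<gamma> k differentiable (at p0)"
    and SL: "det (block_mat C b c \<beta>) = 1"
  shows "linearizable_at F U p0"
proof -
  define P where "P q = Cbp C b q ** F q ** transpose (Cbp C b q)" for q
  have P_diff: "matrix_differentiable P q" if "q \<in> V" for q
    unfolding P_def[abs_def] using F_diff[OF that]
    by (intro matrix_differentiable_mult matrix_differentiable_transpose matrix_differentiable_Cbp)
  have P_pd: "matrix_pd k P q = \<gamma> k q *\<^sub>R P q" if "q \<in> V" for q k
    using nf[OF that] matrix_pd_congruence_iff_normal_form[OF F_diff[OF that] sym[OF that]
        M(1)[OF that] M(2)[OF that], where \<gamma> = "\<lambda>k. \<gamma> k q", folded P_def] by blast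
  have "P p0 \<noteq> 0"
    unfolding P_def using M(1)[OF V(2)] \<open>invertible (F p0)\<close>
    by (intro invertible_imp_nonzero invertible_congruence)
  then obtain r \<nu> where r: "r > 0" "ball p0 r \<subseteq> V"
    and P_prop: "\<And>q. q \<in> ball p0 r \<Longrightarrow> P q = \<nu> q *\<^sub>R P p0"
    using proportional_to_initial_near[OF V(1,2) P_diff \<gamma>_diff P_pd] by blast
  show ?thesis
    unfolding linearizable_at_def
  proof (intro exI conjI ballI)
    show "open (ball p0 r)" "p0 \<in> ball p0 r" "ball p0 r \<subseteq> U"
      using V(3) r by auto
    show "det (block_mat C b c \<beta>) = 1" by (rule SL)
    fix q assume q: "q \<in> ball p0 r"
    show "det (Cbp C b q) \<noteq> 0"
      using M(1) q r(2) invertible_det_nz by blast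
    have "transformed_coef C b F q = det (Cbp C b q) *\<^sub>R P q"
      unfolding transformed_coef_def P_def ..
    then show "transformed_coef C b F q = (det (Cbp C b q) * \<nu> q) *\<^sub>R P p0"
      using P_prop[OF q] by simp
  qed
qed

lemma conditions_imp_linearizable_at:
  fixes F :: "real^'n::finite \<Rightarrow> real^'n^'n"
  assumes n2: "CARD('n) \<ge> 2" and U: "open U" and sm: "\<And>i j. smooth_on U (ent F i j)"
    and sym: "\<And>p. p \<in> U \<Longrightarrow> transpose (F p) = F p"
    and inv: "\<And>p. p \<in> U \<Longrightarrow> invertible (F p)"
    and a0: "\<And>p i j k. p \<in> U \<Longrightarrow> a_coef F i j k p = 0"
    and flat: "\<And>p i j. p \<in> U \<Longrightarrow> pd j (s_coef F i) p = s_coef F i p * s_coef F j p"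
    and p0: "p0 \<in> U"
  shows "linearizable_at F U p0"
proof -
  obtain r where r: "r > 0" "ball p0 r \<subseteq> U"
    and \<psi>_pos: "\<And>q. q \<in> ball p0 r \<Longrightarrow> 1 - inner (\<chi> i. s_coef F i p0) (q - p0) > 0"
    and s_explicit: "\<And>q i. q \<in> ball p0 r \<Longrightarrow>
      (1 - inner (\<chi> i. s_coef F i p0) (q - p0)) * s_coef F i q = s_coef F i p0"
    using riccati_solution_near[of U p0 "\<lambda>i. s_coef F i",
        OF U p0 differentiable_s_coef[OF n2 U _ sm inv] flat] by blast
  define \<gamma> where "\<gamma> k q = c_coef F k q + 2 * s_coef F k q" for k q
  define \<sigma> where "\<sigma> q = (\<chi> i. s_coef F i q)" for q
  define w where "w = - \<sigma> p0"
  define C where "C = normalizing_matrix w (1 + inner (\<sigma> p0) p0)"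
  have M: "invertible (Cbp C w q)" "Cbp C w q *v \<sigma> q = - w" if "q \<in> ball p0 r" for q
  proof -
    have "(1 - inner (\<sigma> p0) (q - p0)) *\<^sub>R \<sigma> q = \<sigma> p0"
      using s_explicit[OF that] by (simp add: vec_eq_iff \<sigma>_def)
    from normalizing_transformation[OF \<psi>_pos[OF that, folded \<sigma>_def] this]
    show "invertible (Cbp C w q)" "Cbp C w q *v \<sigma> q = - w"
      unfolding C_def w_def by simp_all
  qed
  have "derivative_normal_form F (\<lambda>k. \<gamma> k q) (\<sigma> q) q" if "q \<in> ball p0 r" for q
    using a_coef_zero_iff_normal_form a0 that r(2) unfolding \<gamma>_def \<sigma>_def by blast
  moreover have "\<gamma> k differentiable (at p0)" for k
    unfolding \<gamma>_def[abs_def]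
    using differentiable_c_coef[OF n2 U p0 sm inv] differentiable_s_coef[OF n2 U p0 sm inv] by simp
  moreover obtain c \<beta> where "det (block_mat C w c \<beta>) = 1"
    using normalizing_matrix_extends_to_SL unfolding C_def by blast
  ultimately show ?thesis
    using r sym inv[OF p0] M matrix_differentiable_of_smooth[OF sm]
    by (intro normal_form_imp_linearizable_at[of "ball p0 r" p0 U F C w \<sigma> \<gamma> c \<beta>]) auto
qed

theorem proposition1:
  fixes F :: "real^'n::finite \<Rightarrow> real^'n^'n" and U :: "(real^'n) set"
  assumes "CARD('n) \<ge> 2"
    and "open U"
    and "\<And>i j. smooth_on U (ent F i j)"
    and "\<And>p. p \<in> U \<Longrightarrow> transpose (F p) = F p"
    and "\<And>p. p \<in> U \<Longrightarrow> invertible (F p)"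
  shows "(\<forall>p0\<in>U. linearizable_at F U p0) \<longleftrightarrow>
           ((\<forall>p\<in>U. \<forall>i j k. a_coef F i j k p = 0) \<and>
            (\<forall>p\<in>U. \<forall>i j. pd j (s_coef F i) p - s_coef F i p * s_coef F j p = 0))"
  using linearizable_at_imp_conditions[OF assms(1,3,4,5)]
    conditions_imp_linearizable_at[OF assms(1-5)]
  by auto

end
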